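(* Let $p$ be a prime and $n$ a positive integer. Let $m\ge1$, let $k_1,\ldots,k_m$ be positive integers with $k_i\le n$, and let $r_1<r_2<\cdots<r_m$ be positive integers such that $$\lfloor n/p^{r_i}\rfloor-\lfloor k_i/p^{r_i}\rfloor-\lfloor (n-k_i)/p^{r_i}\rfloor=1\quad\text{for } i=1,\ldots,m.$$ Then there exists a single positive integer $k\le n$ such that $$\lfloor n/p^{r_i}\rfloor-\lfloor k/p^{r_i}\rfloor-\lfloor (n-k)/p^{r_i}\rfloor=1\quad\text{for all } i=1,\ldots,m.$$ *)

theory Defs
  imports "HOL-Computational_Algebra.Primes" Complex_Main
begin

end

theory Submission
  imports Defs
begin

(* Write  carry_q(n,k)  for  floor(n/q) - floor(k/q) - floor((n-k)/q).  For 0 < k <= n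
   this quantity is 0 or 1, and it is 1 exactly when adding k and n - k in base q
   produces a carry out of the lowest "digit" modulo q, i.e. exactly when
   n mod q < k mod q.  This turns the hypotheses of the theorem into the purely
   arithmetic conditions  n mod p^(r i) < k_i mod p^(r i).

   Let Q = p^(r m) be the largest of the moduli.  The carry at Q forces Q <= n, and every
   modulus p^(r i) divides Q, so Q - 1 is congruent to -1, the largest residue,
   modulo each of them.  Since n mod p^(r i) is strictly below some residue, it is
   strictly below p^(r i) - 1, so k = Q - 1 produces a carry at every modulus at once. *)

lemma carry_iff_mod_less:
  fixes q n k :: nat
  assumes "q > 0" "k \<le> n"
  shows "\<lfloor>real n / real q\<rfloor> - \<lfloor>real k / real q\<rfloor> - \<lfloor>real (n - k) / real q\<rfloor> = 1
         \<longleftrightarrow> n mod q < k mod q"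
proof -
  define a b where "a = k" and "b = n - k"
  have n_split: "n = a + b" using assms(2) by (simp add: a_def b_def)
  have floor_div: "\<And>x. \<lfloor>real x / real q\<rfloor> = int (x div q)"
    by (metis floor_divide_of_nat_eq of_int_of_nat_eq)
  have div_split: "n div q = a div q + b div q + (a mod q + b mod q) div q"
    using n_split div_add1_eq by simp
  have mod_split: "n mod q = (a mod q + b mod q) mod q"
    using n_split mod_add_eq by metis
  have residues: "a mod q < q" "b mod q < q" using assms(1) by auto
  show ?thesis
  proof (cases "q \<le> a mod q + b mod q")
    case True
    \<comment> \<open>the residues overflow once: quotient gains 1 and the residue drops below a mod q\<close>
    have "a mod q + b mod q - q < q" using residues by linarith
    then have "(a mod q + b mod q) div q = 1"
      using le_div_geq[OF assms(1) True] by simp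
    moreover have "n mod q = a mod q + b mod q - q"
      using mod_split True residues le_mod_geq[OF True] by simp
    ultimately show ?thesis using div_split residues True by (simp add: floor_div a_def b_def)
  next
    case False
    have "(a mod q + b mod q) div q = 0" using False by simp
    moreover have "n mod q = a mod q + b mod q" using mod_split False by simp
    ultimately show ?thesis using div_split by (simp add: floor_div a_def b_def)
  qed
qed

lemma carry_modulus_bounds:
  fixes q n k :: nat
  assumes carry: "n mod q < k mod q" and "k \<le> n"
  shows "2 \<le> q" and "q \<le> n"
proof -
  have "q \<noteq> 0" using carry assms(2) by (cases "q = 0") auto
  moreover have "q \<noteq> 1" using carry by auto
  ultimately show "2 \<le> q" by linarith
  show "q \<le> n"
  proof (rule ccontr)
    assume "\<not> q \<le> n"
    then have "n mod q = n" by simp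
    then show False using carry mod_le_divisor assms(2)
      by (metis le_trans mod_less_eq_dividend not_le)
  qed
qed

text \<open>If n has a carry at q, then so does Q - 1 for every positive multiple Q of q,
  because Q - 1 has the maximal residue q - 1.\<close>

lemma carry_at_pred_of_multiple:
  fixes q Q n k :: nat
  assumes carry: "n mod q < k mod q" and "q dvd Q" and "0 < Q"
  shows "n mod q < (Q - 1) mod q"
proof -
  have q_pos: "0 < q" using assms(2,3) by (cases "q = 0") auto
  have "Suc (Q - 1) mod q = 0" using assms(2,3) by simp
  then have pred_residue: "(Q - 1) mod q = q - 1"
    by (metis mod_Suc diff_Suc_1 nat.distinct(1))
  have "k mod q < q" using q_pos by simp
  then show ?thesis using carry pred_residue by linarith
qed

lemma common_carry_witness:
  fixes Q n :: nat and q k :: "'i \<Rightarrow> nat" and I :: "'i set"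
  assumes carries: "\<And>i. i \<in> I \<Longrightarrow> n mod q i < k i mod q i \<and> k i \<le> n"
    and divides: "\<And>i. i \<in> I \<Longrightarrow> q i dvd Q"
    and top: "j \<in> I" "q j = Q"
  shows "0 < Q - 1 \<and> Q - 1 \<le> n \<and> (\<forall>i\<in>I. n mod q i < (Q - 1) mod q i)"
proof -
  have "2 \<le> Q" "Q \<le> n"
    using carry_modulus_bounds carries[OF top(1)] top(2) by auto
  moreover have "\<forall>i\<in>I. n mod q i < (Q - 1) mod q i"
  proof
    fix i assume i: "i \<in> I"
    show "n mod q i < (Q - 1) mod q i"
      using carry_at_pred_of_multiple carries[OF i] divides[OF i] \<open>2 \<le> Q\<close> by auto
  qed
  ultimately show ?thesis by simp
qed

theorem mainTheorem7:
  fixes p n m :: nat and k r :: "nat \<Rightarrow> nat"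
  assumes "prime p" and "n > 0" and "m \<ge> 1"
    and "\<And>i. i \<in> {1..m} \<Longrightarrow> 0 < k i \<and> k i \<le> n"
    and "\<And>i. i \<in> {1..m} \<Longrightarrow> 0 < r i"
    and "\<And>i j. i \<in> {1..m} \<Longrightarrow> j \<in> {1..m} \<Longrightarrow> i < j \<Longrightarrow> r i < r j"
    and "\<And>i. i \<in> {1..m} \<Longrightarrow>
           \<lfloor>real n / real p ^ r i\<rfloor> - \<lfloor>real (k i) / real p ^ r i\<rfloor>
             - \<lfloor>real (n - k i) / real p ^ r i\<rfloor> = 1"
  shows "\<exists>k0::nat. 0 < k0 \<and> k0 \<le> n \<and>
           (\<forall>i\<in>{1..m}. \<lfloor>real n / real p ^ r i\<rfloor> - \<lfloor>real k0 / real p ^ r i\<rfloor>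
             - \<lfloor>real (n - k0) / real p ^ r i\<rfloor> = 1)"
proof -
  have pow_pos: "\<And>e. 0 < p ^ e" using prime_gt_0_nat[OF assms(1)] by simp
  have carry: "\<lfloor>real n / real p ^ e\<rfloor> - \<lfloor>real k0 / real p ^ e\<rfloor>
        - \<lfloor>real (n - k0) / real p ^ e\<rfloor> = 1 \<longleftrightarrow> n mod p ^ e < k0 mod p ^ e"
    if "k0 \<le> n" for e k0
    using carry_iff_mod_less[OF pow_pos[of e] that, unfolded of_nat_power] .
  have top: "m \<in> {1..m}" using assms(3) by simp
  have "r i \<le> r m" if "i \<in> {1..m}" for i
    using assms(6)[OF that top] that by (cases "i = m") auto
  then have divides: "\<And>i. i \<in> {1..m} \<Longrightarrow> p ^ r i dvd p ^ r m"
    by (simp add: le_imp_power_dvd)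
  have "\<And>i. i \<in> {1..m} \<Longrightarrow> n mod p ^ r i < k i mod p ^ r i \<and> k i \<le> n"
    using assms(4,7) carry by blast
  from common_carry_witness[where q = "\<lambda>i. p ^ r i", OF this divides top refl]
  have pos: "0 < p ^ r m - 1" and le: "p ^ r m - 1 \<le> n"
    and carries: "\<forall>i\<in>{1..m}. n mod p ^ r i < (p ^ r m - 1) mod p ^ r i"
    by auto
  show ?thesis
    using carries carry[OF le] by (intro exI[of _ "p ^ r m - 1"] conjI pos le) auto
qed

end
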